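(* Let $(A,\vee,\perp,0)$ be a quasi-orthomodular nearsemilattice, and define a partial binary operation $\oplus$ on $A$ by: $x \oplus y = z$ if and only if $x \perp y$ and $z = x \vee y$. Then $(A,\oplus,0)$ is a generalized orthoalgebra, and its natural ordering coincides with the nearsemilattice ordering of $A$.
   Context: A nearsemilattice is a poset $A$ with least element $0$ in which any two elements having a common upper bound have a join $x \vee y$ (a partial operation). An orthogonality on $A$ is a binary relation $\perp$ with: $x \perp y$ implies $y \perp x$; $x \le y$ and $y \perp z$ imply $x \perp z$; $x \perp 0$ for all $x$. A quasi-orthomodular nearsemilattice is a nearsemilattice with an orthogonality such that: (a) if $x \perp y$ then $x \vee y$ exists; (b) if $x \le y$ then $y = x \vee z$ for some $z$ with $x \perp z$; (c) if $x \perp y$, $x \perp z$ and $y \le x \vee z$, then $y \le z$. A generalized orthoalgebra is a system $(A,\oplus,0)$ with $\oplus$ a partial binary operation (write $s \perp t$ to mean $s \oplus t$ is defined) satisfying: (1) if $x \perp y$ then $y \perp x$ and $x \oplus y = y \oplus x$; (2) if $x \perp y$ and $x \oplus y \perp z$, then $y \perp z$, $x \perp y \oplus z$ and $(x \oplus y) \oplus z = x \oplus (y \oplus z)$; (3) $x \perp 0$ and $x \oplus 0 = x$; (4) if $x \perp y$, $x \perp z$ and $x \oplus y = x \oplus z$, then $y = z$; (5) if $x \perp x$ then $x = 0$. Its natural ordering is: $x \le y$ iff $y = x \oplus z$ for some $z$ with $x \perp z$. *)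

theory Defs
  imports Main
begin

definition poset_on :: "'a set \<Rightarrow> ('a \<Rightarrow> 'a \<Rightarrow> bool) \<Rightarrow> bool" where
  "poset_on A le \<longleftrightarrow>
     (\<forall>x\<in>A. le x x) \<and>
     (\<forall>x\<in>A. \<forall>y\<in>A. le x y \<and> le y x \<longrightarrow> x = y) \<and>
     (\<forall>x\<in>A. \<forall>y\<in>A. \<forall>z\<in>A. le x y \<and> le y z \<longrightarrow> le x z)"

definition is_join :: "'a set \<Rightarrow> ('a \<Rightarrow> 'a \<Rightarrow> bool) \<Rightarrow> 'a \<Rightarrow> 'a \<Rightarrow> 'a \<Rightarrow> bool" where
  "is_join A le x y z \<longleftrightarrow> z \<in> A \<and> le x z \<and> le y z \<and>
     (\<forall>u\<in>A. le x u \<and> le y u \<longrightarrow> le z u)"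

definition join_exists :: "'a set \<Rightarrow> ('a \<Rightarrow> 'a \<Rightarrow> bool) \<Rightarrow> 'a \<Rightarrow> 'a \<Rightarrow> bool" where
  "join_exists A le x y \<longleftrightarrow> (\<exists>z. is_join A le x y z)"

text \<open>The (partial) join x \<or> y; meaningful only when join_exists.\<close>
definition join :: "'a set \<Rightarrow> ('a \<Rightarrow> 'a \<Rightarrow> bool) \<Rightarrow> 'a \<Rightarrow> 'a \<Rightarrow> 'a" where
  "join A le x y = (THE z. is_join A le x y z)"

definition nearsemilattice :: "'a set \<Rightarrow> ('a \<Rightarrow> 'a \<Rightarrow> bool) \<Rightarrow> 'a \<Rightarrow> bool" where
  "nearsemilattice A le zero \<longleftrightarrow> poset_on A le \<and> zero \<in> A \<and> (\<forall>x\<in>A. le zero x) \<and>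
     (\<forall>x\<in>A. \<forall>y\<in>A. (\<exists>u\<in>A. le x u \<and> le y u) \<longrightarrow> join_exists A le x y)"

definition orthogonality :: "'a set \<Rightarrow> ('a \<Rightarrow> 'a \<Rightarrow> bool) \<Rightarrow> 'a \<Rightarrow> ('a \<Rightarrow> 'a \<Rightarrow> bool) \<Rightarrow> bool" where
  "orthogonality A le zero orth \<longleftrightarrow>
     (\<forall>x\<in>A. \<forall>y\<in>A. orth x y \<longrightarrow> orth y x) \<and>
     (\<forall>x\<in>A. \<forall>y\<in>A. \<forall>z\<in>A. le x y \<and> orth y z \<longrightarrow> orth x z) \<and>
     (\<forall>x\<in>A. orth x zero)"

definition quasi_orthomodular_nsl ::
  "'a set \<Rightarrow> ('a \<Rightarrow> 'a \<Rightarrow> bool) \<Rightarrow> 'a \<Rightarrow> ('a \<Rightarrow> 'a \<Rightarrow> bool) \<Rightarrow> bool" where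
  "quasi_orthomodular_nsl A le zero orth \<longleftrightarrow>
     nearsemilattice A le zero \<and> orthogonality A le zero orth \<and>
     (\<forall>x\<in>A. \<forall>y\<in>A. orth x y \<longrightarrow> join_exists A le x y) \<and>
     (\<forall>x\<in>A. \<forall>y\<in>A. le x y \<longrightarrow> (\<exists>z\<in>A. orth x z \<and> y = join A le x z)) \<and>
     (\<forall>x\<in>A. \<forall>y\<in>A. \<forall>z\<in>A. orth x y \<and> orth x z \<and> le y (join A le x z) \<longrightarrow> le y z)"

definition gen_orthoalgebra :: "'a set \<Rightarrow> ('a \<Rightarrow> 'a \<Rightarrow> 'a option) \<Rightarrow> 'a \<Rightarrow> bool" where
  "gen_orthoalgebra A oplus zero \<longleftrightarrow>
     zero \<in> A \<and>
     (\<forall>x\<in>A. \<forall>y\<in>A. oplus x y \<noteq> None \<longrightarrow> the (oplus x y) \<in> A) \<and>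
     (\<forall>x\<in>A. \<forall>y\<in>A. oplus x y \<noteq> None \<longrightarrow> oplus y x \<noteq> None \<and> oplus x y = oplus y x) \<and>
     (\<forall>x\<in>A. \<forall>y\<in>A. \<forall>z\<in>A. oplus x y \<noteq> None \<and> oplus (the (oplus x y)) z \<noteq> None \<longrightarrow>
        oplus y z \<noteq> None \<and> oplus x (the (oplus y z)) \<noteq> None \<and>
        oplus (the (oplus x y)) z = oplus x (the (oplus y z))) \<and>
     (\<forall>x\<in>A. oplus x zero = Some x) \<and>
     (\<forall>x\<in>A. \<forall>y\<in>A. \<forall>z\<in>A. oplus x y \<noteq> None \<and> oplus x z \<noteq> None \<and> oplus x y = oplus x z \<longrightarrow> y = z) \<and>
     (\<forall>x\<in>A. oplus x x \<noteq> None \<longrightarrow> x = zero)"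

definition natural_le :: "'a set \<Rightarrow> ('a \<Rightarrow> 'a \<Rightarrow> 'a option) \<Rightarrow> 'a \<Rightarrow> 'a \<Rightarrow> bool" where
  "natural_le A oplus x y \<longleftrightarrow> (\<exists>z\<in>A. oplus x z = Some y)"

definition induced_oplus :: "'a set \<Rightarrow> ('a \<Rightarrow> 'a \<Rightarrow> bool) \<Rightarrow> ('a \<Rightarrow> 'a \<Rightarrow> bool) \<Rightarrow> 'a \<Rightarrow> 'a \<Rightarrow> 'a option" where
  "induced_oplus A le orth x y = (if orth x y then Some (join A le x y) else None)"

end

theory Submission
  imports Defs
begin

text \<open>
  Commutativity is that of joins, and
  cancellation and \<open>x \<perp> x \<Longrightarrow> x = 0\<close> are instances of axiom (c). For associativity, let
  \<open>w = (x \<or> y) \<or> z\<close>; axiom (b) writes \<open>w = x \<or> r\<close> with \<open>x \<perp> r\<close>, and axiom (c) gives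
  \<open>y, z \<le> r\<close>, hence \<open>y \<or> z \<le> r\<close> and \<open>x \<perp> y \<or> z\<close>; then \<open>w = x \<or> (y \<or> z)\<close> holds in any poset.
  The natural ordering agrees with \<open>\<le>\<close> by axiom (b).
\<close>

lemma is_join_unique:
  assumes "poset_on A le" "is_join A le x y z" "is_join A le x y z'"
  shows "z = z'"
  using assms unfolding poset_on_def is_join_def by blast

lemma is_join_join:
  assumes "poset_on A le" "join_exists A le x y"
  shows "is_join A le x y (join A le x y)"
proof -
  from assms(2) obtain z where z: "is_join A le x y z"
    unfolding join_exists_def by blast
  with is_join_unique[OF assms(1)] have "join A le x y = z"
    unfolding join_def by blast
  with z show ?thesis by simp
qed

lemma join_eqI:
  assumes "poset_on A le" "is_join A le x y z"
  shows "join A le x y = z"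
  using assms is_join_join is_join_unique join_exists_def by metis

lemma join_commute: "join A le x y = join A le y x"
proof -
  have "is_join A le x y = is_join A le y x"
    unfolding is_join_def by blast
  then show ?thesis
    unfolding join_def by simp
qed

lemma join_assoc:
  assumes P: "poset_on A le" and "x \<in> A" "y \<in> A" "z \<in> A"
    and xy: "join_exists A le x y" and yz: "join_exists A le y z"
    and xy_z: "join_exists A le (join A le x y) z"
  shows "is_join A le x (join A le y z) (join A le (join A le x y) z)"
proof -
  have le_trans: "\<And>a b c. a \<in> A \<Longrightarrow> b \<in> A \<Longrightarrow> c \<in> A \<Longrightarrow> le a b \<Longrightarrow> le b c \<Longrightarrow> le a c"
    using P unfolding poset_on_def by blast
  note J = is_join_join[OF P, unfolded is_join_def]
  from J[OF xy] J[OF yz] J[OF xy_z] assms(2-4) show ?thesis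
    unfolding is_join_def by (meson le_trans)
qed

locale qo_nearsemilattice =
  fixes A le zero orth
  assumes qo: "quasi_orthomodular_nsl A le zero orth"
begin

lemma poset: "poset_on A le"
  using qo by (simp add: quasi_orthomodular_nsl_def nearsemilattice_def)

lemma le_refl: "x \<in> A \<Longrightarrow> le x x"
  using poset by (simp add: poset_on_def)

lemma le_antisym: "x \<in> A \<Longrightarrow> y \<in> A \<Longrightarrow> le x y \<Longrightarrow> le y x \<Longrightarrow> x = y"
  using poset unfolding poset_on_def by blast

lemma le_trans: "x \<in> A \<Longrightarrow> y \<in> A \<Longrightarrow> z \<in> A \<Longrightarrow> le x y \<Longrightarrow> le y z \<Longrightarrow> le x z"
  using poset unfolding poset_on_def by blast

lemma zero_in: "zero \<in> A"
  and zero_le: "x \<in> A \<Longrightarrow> le zero x"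
  using qo by (simp_all add: quasi_orthomodular_nsl_def nearsemilattice_def)

lemma join_exists_upper_bound:
  assumes "x \<in> A" "y \<in> A" "u \<in> A" "le x u" "le y u"
  shows "join_exists A le x y"
proof -
  have "\<forall>x\<in>A. \<forall>y\<in>A. (\<exists>u\<in>A. le x u \<and> le y u) \<longrightarrow> join_exists A le x y"
    using qo by (simp add: quasi_orthomodular_nsl_def nearsemilattice_def)
  with assms show ?thesis by blast
qed

lemma orthogonality: "orthogonality A le zero orth"
  using qo by (simp add: quasi_orthomodular_nsl_def)

lemma orth_sym: "x \<in> A \<Longrightarrow> y \<in> A \<Longrightarrow> orth x y \<Longrightarrow> orth y x"
  and orth_le: "x \<in> A \<Longrightarrow> y \<in> A \<Longrightarrow> z \<in> A \<Longrightarrow> le x y \<Longrightarrow> orth y z \<Longrightarrow> orth x z"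
  and orth_zero: "x \<in> A \<Longrightarrow> orth x zero"
  using orthogonality unfolding orthogonality_def by blast+

lemma orth_join_exists: "x \<in> A \<Longrightarrow> y \<in> A \<Longrightarrow> orth x y \<Longrightarrow> join_exists A le x y"
  using qo by (simp add: quasi_orthomodular_nsl_def)

lemma le_orth_complement: "x \<in> A \<Longrightarrow> y \<in> A \<Longrightarrow> le x y \<Longrightarrow> \<exists>z\<in>A. orth x z \<and> y = join A le x z"
  using qo by (simp add: quasi_orthomodular_nsl_def)

lemma le_join_orth_cancel:
  "x \<in> A \<Longrightarrow> y \<in> A \<Longrightarrow> z \<in> A \<Longrightarrow> orth x y \<Longrightarrow> orth x z \<Longrightarrow> le y (join A le x z) \<Longrightarrow> le y z"
  using qo by (simp add: quasi_orthomodular_nsl_def)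

lemma join_in: "join_exists A le x y \<Longrightarrow> join A le x y \<in> A"
  and join_upper1: "join_exists A le x y \<Longrightarrow> le x (join A le x y)"
  and join_upper2: "join_exists A le x y \<Longrightarrow> le y (join A le x y)"
  and join_least: "join_exists A le x y \<Longrightarrow> u \<in> A \<Longrightarrow> le x u \<Longrightarrow> le y u \<Longrightarrow> le (join A le x y) u"
  using is_join_join[OF poset] unfolding is_join_def by blast+

lemma join_zero: "x \<in> A \<Longrightarrow> join A le x zero = x"
  by (rule join_eqI[OF poset]) (auto simp: is_join_def le_refl zero_le)

lemma orth_join_cancel:
  assumes "x \<in> A" "y \<in> A" "z \<in> A" "orth x y" "orth x z"
    and eq: "join A le x y = join A le x z"
  shows "y = z"
proof -
  have "le y (join A le x z)" and "le z (join A le x y)"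
    using eq join_upper2 orth_join_exists assms by metis+
  then have "le y z" and "le z y"
    using le_join_orth_cancel assms by blast+
  then show ?thesis
    using le_antisym assms by blast
qed

lemma orth_self_eq_zero:
  assumes "x \<in> A" "orth x x"
  shows "x = zero"
proof -
  have "le x (join A le x zero)"
    using assms join_zero le_refl by simp
  then have "le x zero"
    using le_join_orth_cancel[OF _ _ zero_in] orth_zero assms by blast
  then show ?thesis
    using le_antisym zero_in zero_le assms by blast
qed

lemma orth_join_left:
  assumes "x \<in> A" "y \<in> A" "z \<in> A" "orth x y" "orth (join A le x y) z"
  shows "orth x z" "orth y z"
  using assms orth_le join_in join_upper1 join_upper2 orth_join_exists by meson+

lemma orth_join_right:
  assumes x: "x \<in> A" and y: "y \<in> A" and z: "z \<in> A"
    and xy: "orth x y" and xy_z: "orth (join A le x y) z"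
  shows "join_exists A le y z" "orth x (join A le y z)"
proof -
  define s where "s = join A le x y"
  define w where "w = join A le s z"
  have s: "join_exists A le x y" "s \<in> A" "le x s" "le y s"
    using orth_join_exists join_in join_upper1 join_upper2 x y xy s_def by auto
  have w: "join_exists A le s z" "w \<in> A" "le s w" "le z w"
    using orth_join_exists join_in join_upper1 join_upper2 s(2) z xy_z s_def w_def by auto
  have "le x w" "le y w"
    using le_trans x y s w by blast+
  then show yz: "join_exists A le y z"
    using join_exists_upper_bound y z w by blast
  obtain r where r: "r \<in> A" "orth x r" "w = join A le x r"
    using le_orth_complement[OF x w(2) \<open>le x w\<close>] by blast
  have "orth x z"
    using orth_join_left(1)[OF x y z xy xy_z] .
  then have "le y r" "le z r"
    using le_join_orth_cancel x y z r xy \<open>le y w\<close> w(4) by blast+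
  then have "le (join A le y z) r"
    using join_least yz r(1) by blast
  then show "orth x (join A le y z)"
    using orth_sym orth_le join_in yz x r by meson
qed

abbreviation oplus :: "'a \<Rightarrow> 'a \<Rightarrow> 'a option" where
  "oplus \<equiv> induced_oplus A le orth"

lemma oplus_eq_None_iff: "oplus x y = None \<longleftrightarrow> \<not> orth x y"
  by (simp add: induced_oplus_def)

lemma oplus_eq_Some_iff: "oplus x y = Some v \<longleftrightarrow> orth x y \<and> v = join A le x y"
  by (auto simp: induced_oplus_def)

lemma oplus_assoc:
  assumes "x \<in> A" "y \<in> A" "z \<in> A" "oplus x y \<noteq> None" "oplus (the (oplus x y)) z \<noteq> None"
  shows "oplus y z \<noteq> None \<and> oplus x (the (oplus y z)) \<noteq> None \<and>
         oplus (the (oplus x y)) z = oplus x (the (oplus y z))"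
proof -
  have xy: "orth x y" and xy_z: "orth (join A le x y) z"
    using assms(4,5) by (auto simp: induced_oplus_def split: if_splits)
  note yz = orth_join_right[OF assms(1-3) xy xy_z]
  have "join_exists A le x y" "join_exists A le (join A le x y) z"
    using orth_join_exists join_in assms(1-3) xy xy_z by blast+
  with yz(1) have "join A le x (join A le y z) = join A le (join A le x y) z"
    using join_eqI[OF poset] join_assoc[OF poset assms(1-3)] by blast
  with orth_join_left[OF assms(1-3) xy xy_z] yz xy xy_z show ?thesis
    by (simp add: induced_oplus_def)
qed

theorem gen_orthoalgebra_induced: "gen_orthoalgebra A oplus zero"
  unfolding gen_orthoalgebra_def
proof (intro conjI ballI impI)
  fix x y assume x: "x \<in> A" and y: "y \<in> A" and "oplus x y \<noteq> None"
  then have xy: "orth x y"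
    by (simp add: oplus_eq_None_iff)
  then show "the (oplus x y) \<in> A"
    using join_in orth_join_exists x y by (simp add: induced_oplus_def)
  have "orth y x"
    using orth_sym x y xy .
  then show "oplus y x \<noteq> None" "oplus x y = oplus y x"
    using xy by (simp_all add: oplus_eq_None_iff induced_oplus_def join_commute)
next
  fix x y z
  assume "x \<in> A" "y \<in> A" "z \<in> A" "oplus x y \<noteq> None \<and> oplus (the (oplus x y)) z \<noteq> None"
  with oplus_assoc show "oplus y z \<noteq> None" "oplus x (the (oplus y z)) \<noteq> None"
    "oplus (the (oplus x y)) z = oplus x (the (oplus y z))"
    by blast+
next
  fix x y z
  assume "x \<in> A" "y \<in> A" "z \<in> A" "oplus x y \<noteq> None \<and> oplus x z \<noteq> None \<and> oplus x y = oplus x z"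
  then have "orth x y" "orth x z" "join A le x y = join A le x z"
    by (auto simp: induced_oplus_def split: if_splits)
  with orth_join_cancel show "y = z"
    using \<open>x \<in> A\<close> \<open>y \<in> A\<close> \<open>z \<in> A\<close> by blast
next
  fix x assume "x \<in> A" "oplus x x \<noteq> None"
  with orth_self_eq_zero show "x = zero"
    by (simp add: oplus_eq_None_iff)
qed (simp_all add: zero_in oplus_eq_Some_iff orth_zero join_zero)

theorem natural_le_induced_iff:
  assumes x: "x \<in> A" and y: "y \<in> A"
  shows "natural_le A oplus x y \<longleftrightarrow> le x y"
proof
  assume "natural_le A oplus x y"
  then obtain z where z: "z \<in> A" and "oplus x z = Some y"
    unfolding natural_le_def by blast
  then have "orth x z" and "y = join A le x z"
    by (simp_all add: oplus_eq_Some_iff)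
  then show "le x y"
    using join_upper1 orth_join_exists x z by blast
next
  assume "le x y"
  then obtain z where "z \<in> A" "orth x z" "y = join A le x z"
    using le_orth_complement x y by blast
  then show "natural_le A oplus x y"
    unfolding natural_le_def by (auto simp: oplus_eq_Some_iff)
qed

end

theorem theorem3:
  assumes "quasi_orthomodular_nsl A le zero orth"
  shows "gen_orthoalgebra A (induced_oplus A le orth) zero \<and>
         (\<forall>x\<in>A. \<forall>y\<in>A. natural_le A (induced_oplus A le orth) x y \<longleftrightarrow> le x y)"
proof -
  interpret qo_nearsemilattice A le zero orth
    using assms by unfold_locales
  show ?thesis
    using gen_orthoalgebra_induced natural_le_induced_iff by blast
qed

end
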